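(* For any $\lambda,\mu\in\mathbb C\setminus\{\lambda_1,\dots,\lambda_N\}$ and any positive integers $k,l$, $$\{\operatorname{tr}L^k(\lambda),\operatorname{tr}L^l(\mu)\}=0$$ identically on the phase space.
   Context: Fix $N\ge1$, distinct nonzero real $\lambda_1,\dots,\lambda_N$. Phase space: $\mathbb C^{3N}\cong\mathbb R^{6N}$ with complex coordinates $\phi_{j\alpha}$ ($j=1,2,3$, $\alpha=1,\dots,N$) and Wirtinger derivatives $\partial/\partial\phi_{j\alpha}$, $\partial/\partial\bar\phi_{j\alpha}$. The Poisson bracket (associated with the symplectic form $\omega=\mathrm{i}\sum_{j,\alpha}d\bar\phi_{j\alpha}\wedge d\phi_{j\alpha}$) is $$\{\xi,\eta\}=-\mathrm{i}\sum_{j=1}^3\sum_{\alpha=1}^N\Big(\frac{\partial\xi}{\partial\phi_{j\alpha}}\frac{\partial\eta}{\partial\bar\phi_{j\alpha}}-\frac{\partial\xi}{\partial\bar\phi_{j\alpha}}\frac{\partial\eta}{\partial\phi_{j\alpha}}\Big).$$ With $F_\alpha=(\phi_{1\alpha},\phi_{2\alpha},\phi_{3\alpha})^T$ and $C=\operatorname{diag}(1,-1,0)$, $$L(\lambda)=C+\sum_{\alpha=1}^N\frac{1}{\lambda-\lambda_\alpha}F_\alpha F_\alpha^*,$$ a $3\times3$ matrix whose entries are functions on phase space. *)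

theory Defs
  imports "HOL-Analysis.Analysis"
begin

text \<open>Phase space C^{3N}: a point p assigns to each alpha (index type 'n, N = CARD('n))
  and each j (index type 3, j = 0,1,2 standing for 1,2,3) the coordinate phi_{j alpha} = p alpha j.\<close>

type_synonym 'n phase = "'n \<Rightarrow> 3 \<Rightarrow> complex"

definition shift_coord :: "'n phase \<Rightarrow> 3 \<Rightarrow> 'n \<Rightarrow> complex \<Rightarrow> 'n phase" where
  "shift_coord p j a t = p(a := (p a)(j := p a j + t))"

definition pd_re :: "('n phase \<Rightarrow> complex) \<Rightarrow> 3 \<Rightarrow> 'n \<Rightarrow> 'n phase \<Rightarrow> complex" where
  "pd_re f j a p = vector_derivative (\<lambda>s::real. f (shift_coord p j a (of_real s))) (at 0)"

definition pd_im :: "('n phase \<Rightarrow> complex) \<Rightarrow> 3 \<Rightarrow> 'n \<Rightarrow> 'n phase \<Rightarrow> complex" where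
  "pd_im f j a p = vector_derivative (\<lambda>s::real. f (shift_coord p j a (\<i> * of_real s))) (at 0)"

definition wirt :: "('n phase \<Rightarrow> complex) \<Rightarrow> 3 \<Rightarrow> 'n \<Rightarrow> 'n phase \<Rightarrow> complex" where
  "wirt f j a p = (pd_re f j a p - \<i> * pd_im f j a p) / 2"

definition wirt_bar :: "('n phase \<Rightarrow> complex) \<Rightarrow> 3 \<Rightarrow> 'n \<Rightarrow> 'n phase \<Rightarrow> complex" where
  "wirt_bar f j a p = (pd_re f j a p + \<i> * pd_im f j a p) / 2"

definition poisson :: "('n::finite phase \<Rightarrow> complex) \<Rightarrow> ('n phase \<Rightarrow> complex) \<Rightarrow> 'n phase \<Rightarrow> complex" where
  "poisson f g p = - \<i> * (\<Sum>j\<in>(UNIV::3 set). \<Sum>a\<in>(UNIV::'n set).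
      wirt f j a p * wirt_bar g j a p - wirt_bar f j a p * wirt g j a p)"

definition Cmat :: "complex^3^3" where
  "Cmat = (\<chi> i j. if i = j then (if i = 0 then 1 else if i = 1 then -1 else 0) else 0)"

definition Lax :: "('n::finite \<Rightarrow> real) \<Rightarrow> complex \<Rightarrow> 'n phase \<Rightarrow> complex^3^3" where
  "Lax lam mu p = Cmat + (\<chi> i j. \<Sum>a\<in>UNIV. p a i * cnj (p a j) / (mu - of_real (lam a)))"

fun matpow :: "'a::semiring_1^'m^'m \<Rightarrow> nat \<Rightarrow> 'a^'m^'m" where
  "matpow A 0 = mat 1"
| "matpow A (Suc k) = A ** matpow A k"

end

theory Submission
  imports Defs
begin

(* With A = L(la)^(k-1) and B = L(mu)^(l-1), the derivative of tr L(la)^k with respect to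
   conj(phi_(j alpha)) is k (A F_alpha)_j / (la - lam_alpha), so the bracket collapses to
   -i k l sum_alpha F_alpha^* [A,B] F_alpha / ((la - lam_alpha)(mu - lam_alpha)).
   Pairing [A,B] with F_alpha F_alpha^* is a trace, and
   sum_alpha F_alpha F_alpha^* ((la - lam_alpha)^-1 - (mu - lam_alpha)^-1) = L(la) - L(mu),
   so (mu - la) times the bracket is a combination of tr([A,B] L(la)) and tr([A,B] L(mu)).
   Both vanish by cyclicity of the trace, because A commutes with L(la) and B with L(mu);
   for la = mu already [A,B] = 0. *)

lemma matpow_add: "matpow A (m + n) = matpow A m ** matpow A n"
  by (induction m) (auto simp: matrix_mul_assoc)

lemma matpow_commute: "matpow A m ** matpow A n = matpow A n ** matpow A m"
  by (metis add.commute matpow_add)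

lemma matpow_commute_self: "A ** matpow A n = matpow A n ** A"
  using matpow_commute[of A 1 n] by simp

lemma matrix_mult_sum_right: "A ** sum f S = (\<Sum>x\<in>S. A ** f x)"
  by (induction S rule: infinite_finite_induct) (auto simp: matrix_add_ldistrib)

lemma trace_sum: "trace (sum f S) = (\<Sum>x\<in>S. trace (f x))"
  by (simp add: trace_def sum.swap[of _ UNIV])

lemma matrix_matrix_mult_nth: "(A ** B) $ i $ l = (\<Sum>m\<in>UNIV. A $ i $ m * B $ m $ l)"
  by (simp add: matrix_matrix_mult_def)

lemma matpow_has_vector_derivative:
  fixes M :: "real \<Rightarrow> 'a::real_normed_field^'m^'m"
  assumes "\<And>i l. ((\<lambda>s. M s $ i $ l) has_vector_derivative M' $ i $ l) (at t within S)"
  shows "((\<lambda>s. matpow (M s) k $ i $ l) has_vector_derivative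
     (\<Sum>m<k. matpow (M t) m ** M' ** matpow (M t) (k - 1 - m)) $ i $ l) (at t within S)"
proof (induction k arbitrary: i l)
  case 0
  then show ?case by simp
next
  case (Suc k)
  let ?D = "\<lambda>k. \<Sum>m<k. matpow (M t) m ** M' ** matpow (M t) (k - 1 - m)"
  have deriv: "((\<lambda>s. \<Sum>m\<in>UNIV. M s $ i $ m * matpow (M s) k $ m $ l) has_vector_derivative
      (\<Sum>m\<in>UNIV. M t $ i $ m * ?D k $ m $ l + M' $ i $ m * matpow (M t) k $ m $ l)) (at t within S)"
    by (intro has_vector_derivative_sum has_vector_derivative_mult assms Suc)
  have "?D (Suc k) = M t ** ?D k + M' ** matpow (M t) k"
    unfolding sum.lessThan_Suc_shift by (simp add: matrix_mult_sum_right matrix_mul_assoc add.commute)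
  then have D_Suc: "?D (Suc k) $ i $ l
      = (\<Sum>m\<in>UNIV. M t $ i $ m * ?D k $ m $ l + M' $ i $ m * matpow (M t) k $ m $ l)"
    by (simp only: vector_add_component matrix_matrix_mult_nth[of "M t"]
        matrix_matrix_mult_nth[of M'] sum.distrib)
  have matpow_Suc: "matpow (M s) (Suc k) $ i $ l
      = (\<Sum>m\<in>UNIV. M s $ i $ m * matpow (M s) k $ m $ l)" for s
    by (simp add: matrix_matrix_mult_nth)
  show ?case
    unfolding matpow_Suc D_Suc by (rule deriv)
qed

lemma trace_matpow_has_vector_derivative:
  fixes M :: "real \<Rightarrow> 'a::real_normed_field^'m^'m"
  assumes "\<And>i l. ((\<lambda>s. M s $ i $ l) has_vector_derivative M' $ i $ l) (at t within S)"
  shows "((\<lambda>s. trace (matpow (M s) k)) has_vector_derivative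
     of_nat k * trace (matpow (M t) (k - 1) ** M')) (at t within S)"
proof -
  have cyclic: "trace (matpow (M t) m ** M' ** matpow (M t) (k - 1 - m))
      = trace (matpow (M t) (k - 1) ** M')" if "m \<in> {..<k}" for m
  proof -
    have "trace (matpow (M t) m ** M' ** matpow (M t) (k - 1 - m))
        = trace (matpow (M t) (k - 1 - m) ** (matpow (M t) m ** M'))"
      by (rule trace_mul_sym)
    also have "\<dots> = trace (matpow (M t) (k - 1 - m + m) ** M')"
      by (simp only: matpow_add matrix_mul_assoc)
    finally show ?thesis
      using that by simp
  qed
  have "((\<lambda>s. \<Sum>i\<in>UNIV. matpow (M s) k $ i $ i) has_vector_derivative
     (\<Sum>i\<in>UNIV. (\<Sum>m<k. matpow (M t) m ** M' ** matpow (M t) (k - 1 - m)) $ i $ i)) (at t within S)"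
    by (intro has_vector_derivative_sum matpow_has_vector_derivative assms)
  moreover have "(\<Sum>i\<in>UNIV. (\<Sum>m<k. matpow (M t) m ** M' ** matpow (M t) (k - 1 - m)) $ i $ i)
      = (\<Sum>m<k. trace (matpow (M t) m ** M' ** matpow (M t) (k - 1 - m)))"
    by (simp only: trace_def[symmetric] trace_sum)
  also have "\<dots> = of_nat k * trace (matpow (M t) (k - 1) ** M')"
    by (simp only: sum.cong[OF refl cyclic]) simp
  ultimately show ?thesis
    by (simp only: trace_def)
qed

lemma shift_coord_nth: "shift_coord p j a t b i = (if b = a \<and> i = j then p b i + t else p b i)"
  by (simp add: shift_coord_def)

lemma shift_coord_has_vector_derivative:
  "((\<lambda>s. shift_coord p j a (u * of_real s) b i) has_vector_derivative
     (if b = a \<and> i = j then u else 0)) (at t within S)"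
  unfolding shift_coord_nth
  by (auto intro!: derivative_eq_intros)

lemma Lax_shift_coord_has_vector_derivative:
  "((\<lambda>s. Lax lam la (shift_coord p j a (u * of_real s)) $ i $ l) has_vector_derivative
     ((if i = j then u * cnj (p a l) else 0) + (if l = j then p a i * cnj u else 0))
       / (la - of_real (lam a))) (at 0)"
proof -
  let ?q = "\<lambda>s. shift_coord p j a (u * of_real s)"
  let ?d = "\<lambda>b i. if b = a \<and> i = j then u else 0"
  have "((\<lambda>s. \<Sum>b\<in>UNIV. ?q s b i * cnj (?q s b l) / (la - of_real (lam b))) has_vector_derivative
      (\<Sum>b\<in>UNIV. (?q 0 b i * cnj (?d b l) + ?d b i * cnj (?q 0 b l)) / (la - of_real (lam b)))) (at 0)"
    by (intro has_vector_derivative_sum has_vector_derivative_divide has_vector_derivative_mult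
        has_vector_derivative_cnj shift_coord_has_vector_derivative)
  moreover have "(?q 0 b i * cnj (?d b l) + ?d b i * cnj (?q 0 b l)) / (la - of_real (lam b))
      = (if b = a then ((if i = j then u * cnj (p a l) else 0) + (if l = j then p a i * cnj u else 0))
          / (la - of_real (lam a)) else 0)" for b
    by (cases "b = a") (auto simp: shift_coord_def)
  ultimately have "((\<lambda>s. \<Sum>b\<in>UNIV. ?q s b i * cnj (?q s b l) / (la - of_real (lam b)))
      has_vector_derivative ((if i = j then u * cnj (p a l) else 0) + (if l = j then p a i * cnj u else 0))
          / (la - of_real (lam a))) (at 0)"
    by simp
  then show ?thesis
    unfolding Lax_def vector_add_component vec_lambda_beta
    by (subst add.commute) (rule has_vector_derivative_add_const[THEN iffD2])
qed

lemma trace_mult_coord_variation: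
  fixes A :: "'a::field^'m^'m"
  shows "trace (A ** (\<chi> i l. ((if i = j then u * y l else 0) + (if l = j then x i * v else 0)) / d))
    = (u * (\<Sum>i\<in>UNIV. y i * A $ i $ j) + v * (\<Sum>l\<in>UNIV. A $ j $ l * x l)) / d"
proof -
  have "trace (A ** (\<chi> i l. ((if i = j then u * y l else 0) + (if l = j then x i * v else 0)) / d))
    = (\<Sum>i\<in>UNIV. \<Sum>l\<in>UNIV. (if l = j then A $ i $ l * u * y i / d else 0)
          + (if i = j then A $ i $ l * x l * v / d else 0))"
    unfolding trace_def matrix_matrix_mult_def
    by (auto intro!: sum.cong simp: add_divide_distrib distrib_left mult.assoc)
  also have "\<dots> = (\<Sum>i\<in>UNIV. A $ i $ j * u * y i / d) + (\<Sum>l\<in>UNIV. A $ j $ l * x l * v / d)"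
    by (simp add: sum.distrib sum.swap[of _ UNIV UNIV])
  also have "\<dots> = (u * (\<Sum>i\<in>UNIV. y i * A $ i $ j) + v * (\<Sum>l\<in>UNIV. A $ j $ l * x l)) / d"
    by (simp add: sum_distrib_left sum_divide_distrib add_divide_distrib mult_ac)
  finally show ?thesis .
qed

lemma trace_matpow_Lax_directional_derivative:
  fixes lam :: "'n::finite \<Rightarrow> real" and la :: complex and p :: "'n phase" and k :: nat
  defines "A \<equiv> matpow (Lax lam la p) (k - 1)"
  shows "vector_derivative (\<lambda>s. trace (matpow (Lax lam la (shift_coord p j a (u * of_real s))) k)) (at 0)
    = of_nat k * (u * (\<Sum>i\<in>UNIV. cnj (p a i) * A $ i $ j) + cnj u * (\<Sum>l\<in>UNIV. A $ j $ l * p a l))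
        / (la - of_real (lam a))"
proof -
  let ?M = "\<lambda>s. Lax lam la (shift_coord p j a (u * of_real s))"
  let ?M' = "\<chi> i l. ((if i = j then u * cnj (p a l) else 0) + (if l = j then p a i * cnj u else 0))
    / (la - of_real (lam a))"
  have "((\<lambda>s. trace (matpow (?M s) k)) has_vector_derivative
      of_nat k * trace (matpow (?M 0) (k - 1) ** ?M')) (at 0)"
    by (rule trace_matpow_has_vector_derivative) (simp add: Lax_shift_coord_has_vector_derivative)
  moreover have "?M 0 = Lax lam la p"
    by (simp add: shift_coord_def)
  ultimately show ?thesis
    by (simp add: vector_derivative_at trace_mult_coord_variation A_def mult.commute)
qed

lemma wirt_wirt_bar_eqI:
  assumes "\<And>u. vector_derivative (\<lambda>s. f (shift_coord p j a (u * of_real s))) (at 0) = u * X + cnj u * Y"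
  shows "wirt f j a p = X" and "wirt_bar f j a p = Y"
proof -
  have re: "pd_re f j a p = X + Y"
    using assms[of 1] by (simp add: pd_re_def)
  have im: "pd_im f j a p = \<i> * (X - Y)"
    using assms[of \<i>] by (simp add: pd_im_def right_diff_distrib)
  show "wirt f j a p = X" and "wirt_bar f j a p = Y"
    unfolding wirt_def wirt_bar_def re im by (simp_all add: field_simps)
qed

lemma wirt_trace_matpow_Lax:
  fixes lam :: "'n::finite \<Rightarrow> real" and la :: complex and p :: "'n phase" and k :: nat
  defines "A \<equiv> matpow (Lax lam la p) (k - 1)"
  shows "wirt (\<lambda>q. trace (matpow (Lax lam la q) k)) j a p
      = of_nat k * (\<Sum>i\<in>UNIV. cnj (p a i) * A $ i $ j) / (la - of_real (lam a))"
    and "wirt_bar (\<lambda>q. trace (matpow (Lax lam la q) k)) j a p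
      = of_nat k * (\<Sum>l\<in>UNIV. A $ j $ l * p a l) / (la - of_real (lam a))"
proof -
  have "vector_derivative (\<lambda>s. trace (matpow (Lax lam la (shift_coord p j a (u * of_real s))) k)) (at 0)
    = u * (of_nat k * (\<Sum>i\<in>UNIV. cnj (p a i) * A $ i $ j) / (la - of_real (lam a)))
      + cnj u * (of_nat k * (\<Sum>l\<in>UNIV. A $ j $ l * p a l) / (la - of_real (lam a)))" for u
    unfolding A_def trace_matpow_Lax_directional_derivative
    by (simp add: add_divide_distrib distrib_left mult_ac)
  then show "wirt (\<lambda>q. trace (matpow (Lax lam la q) k)) j a p
      = of_nat k * (\<Sum>i\<in>UNIV. cnj (p a i) * A $ i $ j) / (la - of_real (lam a))"
    and "wirt_bar (\<lambda>q. trace (matpow (Lax lam la q) k)) j a p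
      = of_nat k * (\<Sum>l\<in>UNIV. A $ j $ l * p a l) / (la - of_real (lam a))"
    by (rule wirt_wirt_bar_eqI[where f = "\<lambda>q. trace (matpow (Lax lam la q) k)"])+
qed

definition sesq_form :: "complex^'m^'m \<Rightarrow> ('m \<Rightarrow> complex) \<Rightarrow> complex" where
  "sesq_form K x = (\<Sum>i\<in>UNIV. \<Sum>l\<in>UNIV. cnj (x i) * K $ i $ l * x l)"

lemma sesq_form_matrix_mult:
  "(\<Sum>j\<in>UNIV. (\<Sum>i\<in>UNIV. cnj (x i) * A $ i $ j) * (\<Sum>l\<in>UNIV. B $ j $ l * x l))
    = sesq_form (A ** B) x"
proof -
  have "(\<Sum>j\<in>UNIV. (\<Sum>i\<in>UNIV. cnj (x i) * A $ i $ j) * (\<Sum>l\<in>UNIV. B $ j $ l * x l))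
      = (\<Sum>j\<in>UNIV. \<Sum>i\<in>UNIV. \<Sum>l\<in>UNIV. cnj (x i) * A $ i $ j * B $ j $ l * x l)"
    by (simp add: sum_product mult.assoc)
  also have "\<dots> = (\<Sum>i\<in>UNIV. \<Sum>j\<in>UNIV. \<Sum>l\<in>UNIV. cnj (x i) * A $ i $ j * B $ j $ l * x l)"
    by (rule sum.swap)
  also have "\<dots> = (\<Sum>i\<in>UNIV. \<Sum>l\<in>UNIV. \<Sum>j\<in>UNIV. cnj (x i) * A $ i $ j * B $ j $ l * x l)"
    by (rule sum.cong[OF refl sum.swap])
  also have "\<dots> = sesq_form (A ** B) x"
    by (simp add: sesq_form_def matrix_matrix_mult_def sum_distrib_left sum_distrib_right mult.assoc)
  finally show ?thesis .
qed

lemma trace_mult_Lax: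
  "trace (K ** Lax lam la p)
    = trace (K ** Cmat) + (\<Sum>a\<in>UNIV. sesq_form K (p a) / (la - of_real (lam a)))"
proof -
  have "trace (K ** (\<chi> m i. \<Sum>a\<in>UNIV. p a m * cnj (p a i) / (la - of_real (lam a))))
      = (\<Sum>i\<in>UNIV. \<Sum>m\<in>UNIV. \<Sum>a\<in>UNIV. cnj (p a i) * K $ i $ m * p a m / (la - of_real (lam a)))"
    by (simp add: trace_def matrix_matrix_mult_def sum_distrib_left mult_ac)
  also have "\<dots> = (\<Sum>i\<in>UNIV. \<Sum>a\<in>UNIV. \<Sum>m\<in>UNIV. cnj (p a i) * K $ i $ m * p a m / (la - of_real (lam a)))"
    by (rule sum.cong[OF refl sum.swap])
  also have "\<dots> = (\<Sum>a\<in>UNIV. \<Sum>i\<in>UNIV. \<Sum>m\<in>UNIV. cnj (p a i) * K $ i $ m * p a m / (la - of_real (lam a)))"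
    by (rule sum.swap)
  also have "\<dots> = (\<Sum>a\<in>UNIV. sesq_form K (p a) / (la - of_real (lam a)))"
    by (simp add: sesq_form_def sum_divide_distrib)
  finally show ?thesis
    by (simp add: Lax_def matrix_add_ldistrib trace_add)
qed

lemma trace_mult_Lax_diff:
  assumes "\<forall>a. la \<noteq> of_real (lam a)" and "\<forall>a. mu \<noteq> of_real (lam a)"
  shows "trace (K ** Lax lam la p) - trace (K ** Lax lam mu p)
    = (mu - la) * (\<Sum>a\<in>UNIV. sesq_form K (p a) / ((la - of_real (lam a)) * (mu - of_real (lam a))))"
proof -
  have "sesq_form K (p a) / (la - of_real (lam a)) - sesq_form K (p a) / (mu - of_real (lam a))
      = (mu - la) * (sesq_form K (p a) / ((la - of_real (lam a)) * (mu - of_real (lam a))))" for a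
    using assms by (simp add: field_simps)
  then show ?thesis
    by (simp add: trace_mult_Lax sum_subtractf[symmetric] sum_distrib_left)
qed

lemma trace_mult_swap_if_commute:
  fixes A B L :: "'a::comm_semiring_1^'m^'m"
  assumes "A ** L = L ** A"
  shows "trace (A ** B ** L) = trace (B ** A ** L)"
proof -
  have "trace (B ** A ** L) = trace (B ** L ** A)"
    by (simp add: assms matrix_mul_assoc[symmetric])
  also have "\<dots> = trace (A ** B ** L)"
    by (simp add: trace_mul_sym[of "B ** L"] matrix_mul_assoc)
  finally show ?thesis ..
qed

lemma sesq_form_commutator_sum_eq_0:
  assumes "\<forall>a. la \<noteq> of_real (lam a)" and "\<forall>a. mu \<noteq> of_real (lam a)" and "la \<noteq> mu"
    and "A ** Lax lam la p = Lax lam la p ** A" and "B ** Lax lam mu p = Lax lam mu p ** B"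
  shows "(\<Sum>a\<in>UNIV. (sesq_form (A ** B) (p a) - sesq_form (B ** A) (p a))
    / ((la - of_real (lam a)) * (mu - of_real (lam a)))) = 0"
    (is "?S = 0")
proof -
  let ?D = "\<lambda>a. (la - of_real (lam a)) * (mu - of_real (lam a))"
  have "(mu - la) * ?S = (mu - la) * (\<Sum>a\<in>UNIV. sesq_form (A ** B) (p a) / ?D a)
      - (mu - la) * (\<Sum>a\<in>UNIV. sesq_form (B ** A) (p a) / ?D a)"
    unfolding diff_divide_distrib sum_subtractf right_diff_distrib ..
  also have "\<dots> = (trace (A ** B ** Lax lam la p) - trace (A ** B ** Lax lam mu p))
      - (trace (B ** A ** Lax lam la p) - trace (B ** A ** Lax lam mu p))"
    unfolding trace_mult_Lax_diff[OF assms(1,2)] ..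
  also have "\<dots> = 0"
    using trace_mult_swap_if_commute[OF assms(4)] trace_mult_swap_if_commute[OF assms(5)] by simp
  finally show ?thesis
    using assms(3) by simp
qed

lemma poisson_trace_matpow_Lax:
  fixes lam :: "'n::finite \<Rightarrow> real" and la mu :: complex and p :: "'n phase" and k l :: nat
  defines "A \<equiv> matpow (Lax lam la p) (k - 1)" and "B \<equiv> matpow (Lax lam mu p) (l - 1)"
  shows "poisson (\<lambda>q. trace (matpow (Lax lam la q) k)) (\<lambda>q. trace (matpow (Lax lam mu q) l)) p
    = - \<i> * of_nat k * of_nat l * (\<Sum>a\<in>UNIV. (sesq_form (A ** B) (p a) - sesq_form (B ** A) (p a))
        / ((la - of_real (lam a)) * (mu - of_real (lam a))))"
proof -
  let ?row = "\<lambda>M a j. \<Sum>i\<in>UNIV. cnj (p a i) * M $ i $ j"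
  let ?col = "\<lambda>M a j. \<Sum>i\<in>UNIV. M $ j $ i * p a i"
  let ?w = "\<lambda>a. 1 / ((la - of_real (lam a)) * (mu - of_real (lam a)))"
  have "poisson (\<lambda>q. trace (matpow (Lax lam la q) k)) (\<lambda>q. trace (matpow (Lax lam mu q) l)) p
    = - \<i> * (\<Sum>j\<in>UNIV. \<Sum>a\<in>UNIV. of_nat k * of_nat l * ?w a
        * (?row A a j * ?col B a j - ?row B a j * ?col A a j))"
    unfolding poisson_def wirt_trace_matpow_Lax A_def B_def
    by (simp add: field_simps) (simp only: diff_divide_distrib)
  also have "\<dots> = - \<i> * (\<Sum>a\<in>UNIV. \<Sum>j\<in>UNIV. of_nat k * of_nat l * ?w a
        * (?row A a j * ?col B a j - ?row B a j * ?col A a j))"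
    by (subst sum.swap) (rule refl)
  also have "\<dots> = - \<i> * of_nat k * of_nat l * (\<Sum>a\<in>UNIV. ?w a
        * (\<Sum>j\<in>UNIV. ?row A a j * ?col B a j - ?row B a j * ?col A a j))"
    by (simp add: sum_distrib_left mult.assoc)
  also have "\<dots> = - \<i> * of_nat k * of_nat l * (\<Sum>a\<in>UNIV. (sesq_form (A ** B) (p a) - sesq_form (B ** A) (p a))
        / ((la - of_real (lam a)) * (mu - of_real (lam a))))"
    by (simp add: sum_subtractf sesq_form_matrix_mult)
  finally show ?thesis .
qed

theorem lemma3:
  fixes lam :: "'n::finite \<Rightarrow> real" and la mu :: complex and k l :: nat
  assumes "inj lam"
    and "\<forall>a. lam a \<noteq> 0"
    and "\<forall>a. la \<noteq> of_real (lam a)"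
    and "\<forall>a. mu \<noteq> of_real (lam a)"
    and "k \<ge> 1" and "l \<ge> 1"
  shows "\<forall>p. poisson (\<lambda>q. trace (matpow (Lax lam la q) k))
                     (\<lambda>q. trace (matpow (Lax lam mu q) l)) p = 0"
proof
  fix p :: "'n phase"
  define A where "A = matpow (Lax lam la p) (k - 1)"
  define B where "B = matpow (Lax lam mu p) (l - 1)"
  have "(\<Sum>a\<in>UNIV. (sesq_form (A ** B) (p a) - sesq_form (B ** A) (p a))
    / ((la - of_real (lam a)) * (mu - of_real (lam a)))) = 0"
  proof (cases "la = mu")
    case True
    then show ?thesis
      by (simp add: A_def B_def matpow_commute)
  next
    case False
    show ?thesis
      by (intro sesq_form_commutator_sum_eq_0)
        (simp_all add: assms(3,4) False A_def B_def matpow_commute_self)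
  qed
  then show "poisson (\<lambda>q. trace (matpow (Lax lam la q) k))
      (\<lambda>q. trace (matpow (Lax lam mu q) l)) p = 0"
    by (simp add: poisson_trace_matpow_Lax A_def B_def)
qed

end
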